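(* Let $r$ be an integer. For every choice of $\gamma_{2i}\in\mathbb{K}$, $i=0,1,2,\dots$, there is a unique choice of $\gamma_{2i+1}\in\mathbb{K}$, $i=0,1,2,\dots$, such that $\varphi(x)=\sum_{i\ge0}\gamma_ix^i\in\mathcal{F}_r$.
   Context: $\mathbb{K}\in\{\mathbb{Q},\mathbb{R},\mathbb{C}\}$. For $r\in\mathbb{Z}$, $\mathcal{F}_r$ denotes the space of $\varphi\in\mathbb{K}[[x]]$ with $\varphi(x/(x-1))=(1-x)^r\varphi(x)$. *)

theory Defs
  imports "HOL-Computational_Algebra.Formal_Power_Series"
begin

text \<open>The space F_r: formal power series phi with phi(x/(x-1)) = (1-x)^r phi(x).
  Composition is formal composition; x/(x-1) has zero constant term.\<close>
definition F_space :: "int \<Rightarrow> 'a::field fps set" where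
  "F_space r = {\<phi>. \<phi> oo (fps_X * inverse (fps_X - 1)) = ((1 - fps_X) powi r) * \<phi>}"

end

(*
  Write \<sigma> = x/(x-1) and D(\<phi>) = \<phi> \<circ> \<sigma> - (1-x)^r \<phi>, so that F_r is the kernel of D.
  Since \<sigma> is an involution and (1-x)^r \<circ> \<sigma> = (1-x)^-r, one gets
  D(\<phi>) \<circ> \<sigma> = -(1-x)^-r D(\<phi>); comparing lowest-order terms with \<sigma> = -x + O(x^2) shows
  that a nonzero D(\<phi>) has odd order, whereas a nonzero element of F_r has even order.
  The n-th coefficient of D(\<phi>) depends on \<phi>_n only through ((-1)^n - 1) \<phi>_n, so the odd
  coefficients of \<phi> can be chosen recursively to make the odd coefficients of D(\<phi>) vanish,
  which forces D(\<phi>) = 0. Two solutions with the same even coefficients differ by an element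
  of F_r with odd order, hence coincide.
*)
theory Submission
  imports Defs
begin

unbundle fps_syntax

lemma fps_compose_nth_cutoff:
  fixes f c :: "'a::comm_ring_1 fps"
  assumes "c $ 0 = 0"
  shows "(f oo c) $ n = (fps_cutoff n f oo c) $ n + f $ n * (c $ 1) ^ n"
  by (simp add: fps_compose_nth atLeast0AtMost lessThan_Suc_atMost[symmetric]
      startsby_zero_power_nth_same[OF assms])

lemma fps_mult_nth_cutoff:
  fixes f g :: "'a::comm_ring_1 fps"
  shows "(g * f) $ n = (g * fps_cutoff n f) $ n + g $ 0 * f $ n"
proof -
  have "(g * f) $ n - (g * fps_cutoff n f) $ n = (g * (f - fps_cutoff n f)) $ n"
    by (simp add: algebra_simps)
  also have "\<dots> = (\<Sum>i=0..n. if i = 0 then g $ 0 * f $ n else 0)"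
    unfolding fps_mult_nth by (rule sum.cong) auto
  finally show ?thesis
    by (simp add: algebra_simps)
qed

lemma fps_compose_eq_mult_subdegree:
  fixes c A D :: "'a::idom fps"
  assumes "c $ 0 = 0" and "D \<noteq> 0" and "D oo c = A * D"
  shows "(c $ 1) ^ subdegree D = A $ 0"
proof -
  define m where "m = subdegree D"
  have "fps_cutoff m D = 0"
    by (simp add: fps_cutoff_zero_iff m_def)
  then have "(D oo c) $ m = D $ m * (c $ 1) ^ m"
    using fps_compose_nth_cutoff[OF assms(1), of D m] by simp
  moreover have "(A * D) $ m = A $ 0 * D $ m"
    by (simp add: m_def)
  ultimately have "D $ m * (c $ 1) ^ m = D $ m * A $ 0"
    using assms(3) by (metis mult.commute)
  then show ?thesis
    using assms(2) by (auto simp: m_def)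
qed

definition fps_sigma :: "'a::field fps" where
  "fps_sigma = fps_X * inverse (fps_X - 1)"

lemma fps_sigma_eq: "fps_sigma = 1 - inverse (1 - fps_X :: 'a::field fps)"
proof -
  have unit: "(fps_X - 1) * inverse (fps_X - 1) = (1::'a fps)"
    by (simp add: inverse_mult_eq_1')
  have "inverse (1 - fps_X) = - inverse (fps_X - 1 :: 'a fps)"
    by (rule fps_inverse_unique) (use unit in \<open>simp add: algebra_simps\<close>)
  moreover have "fps_X * inverse (fps_X - 1) = 1 + inverse (fps_X - 1 :: 'a fps)"
    using unit by (simp add: algebra_simps)
  ultimately show ?thesis
    by (simp add: fps_sigma_def)
qed

lemma fps_sigma_nth_0 [simp]: "fps_sigma $ 0 = (0::'a::field)"
  by (simp add: fps_sigma_def)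

lemma fps_sigma_nth_1: "fps_sigma $ 1 = (-1::'a::field)"
  by (simp add: fps_sigma_def)

lemma one_minus_X_compose_sigma: "(1 - fps_X) oo fps_sigma = inverse (1 - fps_X :: 'a::field fps)"
  by (simp add: fps_compose_sub_distrib fps_sigma_eq)

lemma inverse_one_minus_X_compose_sigma:
  "inverse (1 - fps_X) oo fps_sigma = (1 - fps_X :: 'a::field fps)"
  by (simp add: fps_inverse_compose one_minus_X_compose_sigma)

lemma fps_sigma_compose_sigma: "fps_sigma oo fps_sigma = (fps_X :: 'a::field fps)"
  by (subst (1) fps_sigma_eq)
     (simp add: fps_compose_sub_distrib inverse_one_minus_X_compose_sigma)

lemma one_minus_X_powi_compose_sigma:
  "(1 - fps_X) powi r oo fps_sigma = (1 - fps_X :: 'a::field fps) powi (-r)"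
  by (simp add: power_int_def fps_compose_power[symmetric] one_minus_X_compose_sigma
      inverse_one_minus_X_compose_sigma)

lemma one_minus_X_powi_nth_0 [simp]: "((1 - fps_X) powi r) $ 0 = (1::'a::field)"
  by (simp add: power_int_def fps_nth_power_0)

lemma one_minus_X_powi_uminus_mult:
  "(1 - fps_X) powi (-r) * (1 - fps_X :: 'a::field fps) powi r = 1"
  by (auto simp: power_int_def inverse_mult_eq_1 inverse_mult_eq_1'
      simp flip: power_mult_distrib)

definition F_defect :: "int \<Rightarrow> 'a::field fps \<Rightarrow> 'a fps" where
  "F_defect r \<phi> = (\<phi> oo fps_sigma) - (1 - fps_X) powi r * \<phi>"

lemma F_space_iff_F_defect_eq_0: "\<phi> \<in> F_space r \<longleftrightarrow> F_defect r \<phi> = 0"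
  by (simp add: F_space_def F_defect_def fps_sigma_def right_minus_eq)

lemma F_defect_diff: "F_defect r (\<phi> - \<psi>) = F_defect r \<phi> - F_defect r \<psi>"
  by (simp add: F_defect_def fps_compose_sub_distrib right_diff_distrib)

lemma F_defect_compose_sigma:
  "F_defect r \<phi> oo fps_sigma = - ((1 - fps_X) powi (-r) * F_defect r \<phi>)"
proof -
  have "\<phi> oo fps_sigma oo fps_sigma = \<phi>"
    by (simp flip: fps_compose_assoc add: fps_sigma_compose_sigma)
  then have "F_defect r \<phi> oo fps_sigma = \<phi> - (1 - fps_X) powi (-r) * (\<phi> oo fps_sigma)"
    by (simp add: F_defect_def fps_compose_sub_distrib fps_compose_mult_distrib
        one_minus_X_powi_compose_sigma)
  also have "\<dots> = (1 - fps_X) powi (-r) * ((1 - fps_X) powi r * \<phi>)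
                  - (1 - fps_X) powi (-r) * (\<phi> oo fps_sigma)"
    by (simp add: mult.assoc[symmetric] one_minus_X_powi_uminus_mult)
  also have "\<dots> = - ((1 - fps_X) powi (-r) * F_defect r \<phi>)"
    by (simp add: F_defect_def algebra_simps)
  finally show ?thesis .
qed

lemma F_defect_nth_cutoff:
  "F_defect r \<phi> $ n = F_defect r (fps_cutoff n \<phi>) $ n + ((-1) ^ n - 1) * \<phi> $ n"
  unfolding F_defect_def fps_sub_nth fps_compose_nth_cutoff[OF fps_sigma_nth_0, of \<phi> n]
    fps_sigma_nth_1 fps_mult_nth_cutoff[of "(1 - fps_X) powi r" \<phi> n]
  by (simp add: algebra_simps)

lemma F_space_subdegree_even:
  fixes \<phi> :: "'a::field_char_0 fps"
  assumes "\<phi> \<in> F_space r" and "\<phi> \<noteq> 0"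
  shows "even (subdegree \<phi>)"
proof -
  have "\<phi> oo fps_sigma = (1 - fps_X) powi r * \<phi>"
    using assms(1) by (simp add: F_space_iff_F_defect_eq_0 F_defect_def)
  note fps_compose_eq_mult_subdegree[OF fps_sigma_nth_0 assms(2) this]
  then have "(-1) ^ subdegree \<phi> = (1::'a)"
    by (simp only: fps_sigma_nth_1 one_minus_X_powi_nth_0)
  then show ?thesis
    by (metis neg_one_odd_power one_neq_neg_one)
qed

lemma F_defect_subdegree_odd:
  fixes \<phi> :: "'a::field_char_0 fps"
  assumes "F_defect r \<phi> \<noteq> 0"
  shows "odd (subdegree (F_defect r \<phi>))"
proof -
  have "F_defect r \<phi> oo fps_sigma = - ((1 - fps_X) powi (-r)) * F_defect r \<phi>"
    by (simp add: F_defect_compose_sigma)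
  note fps_compose_eq_mult_subdegree[OF fps_sigma_nth_0 assms this]
  then have "(-1) ^ subdegree (F_defect r \<phi>) = (-1::'a)"
    by (simp only: fps_sigma_nth_1 fps_neg_nth one_minus_X_powi_nth_0)
  then show ?thesis
    by (metis neg_one_even_power one_neq_neg_one)
qed

lemma F_space_eqI:
  fixes \<phi> \<psi> :: "'a::field_char_0 fps"
  assumes "\<phi> \<in> F_space r" and "\<psi> \<in> F_space r" and "\<And>k. \<phi> $ (2 * k) = \<psi> $ (2 * k)"
  shows "\<phi> = \<psi>"
proof (rule ccontr)
  assume "\<phi> \<noteq> \<psi>"
  moreover have "\<phi> - \<psi> \<in> F_space r"
    using assms(1,2) by (simp add: F_space_iff_F_defect_eq_0 F_defect_diff)
  ultimately have "even (subdegree (\<phi> - \<psi>))"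
    by (simp add: F_space_subdegree_even)
  then obtain k where "subdegree (\<phi> - \<psi>) = 2 * k" ..
  then have "(\<phi> - \<psi>) $ subdegree (\<phi> - \<psi>) = 0"
    using assms(3) by simp
  with \<open>\<phi> \<noteq> \<psi>\<close> show False
    by (metis nth_subdegree_zero_iff right_minus_eq)
qed

text \<open>In odd degree \<open>n\<close>, \<open>F_defect_nth_cutoff\<close> makes the \<open>n\<close>-th coefficient of the defect
  vanish exactly for this choice of the \<open>n\<close>-th coefficient.\<close>
fun odd_completion :: "(nat \<Rightarrow> 'a::field) \<Rightarrow> int \<Rightarrow> nat \<Rightarrow> 'a" where
  "odd_completion g r n =
     (if even n then g (n div 2)
      else F_defect r (Abs_fps (\<lambda>i. if i < n then odd_completion g r i else 0)) $ n / 2)"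

declare odd_completion.simps [simp del]

lemma odd_completion_even [simp]: "odd_completion g r (2 * k) = g k"
  by (simp add: odd_completion.simps)

lemma F_defect_odd_completion_nth_odd:
  fixes g :: "nat \<Rightarrow> 'a::field_char_0"
  assumes "odd n"
  shows "F_defect r (Abs_fps (odd_completion g r)) $ n = 0"
proof -
  have "fps_cutoff n (Abs_fps (odd_completion g r))
      = Abs_fps (\<lambda>i. if i < n then odd_completion g r i else 0)"
    by (rule fps_ext) simp
  then show ?thesis
    using assms F_defect_nth_cutoff[of r "Abs_fps (odd_completion g r)" n]
    by (simp add: odd_completion.simps[of g r n])
qed

lemma odd_completion_in_F_space:
  fixes g :: "nat \<Rightarrow> 'a::field_char_0"
  shows "Abs_fps (odd_completion g r) \<in> F_space r"
proof -
  have "F_defect r (Abs_fps (odd_completion g r)) = 0"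
    using F_defect_subdegree_odd F_defect_odd_completion_nth_odd nth_subdegree_nonzero by blast
  then show ?thesis
    by (simp add: F_space_iff_F_defect_eq_0)
qed

lemma interleave_odd_completion:
  "Abs_fps (\<lambda>n. if even n then g (n div 2) else odd_completion g r (2 * (n div 2) + 1))
     = Abs_fps (odd_completion g r)"
  by (rule fps_ext) (auto elim: evenE)

theorem corollary5p1:
  fixes r :: int and \<gamma>even :: "nat \<Rightarrow> 'a::field_char_0"
  shows "\<exists>!\<gamma>odd :: nat \<Rightarrow> 'a.
           Abs_fps (\<lambda>n. if even n then \<gamma>even (n div 2) else \<gamma>odd (n div 2)) \<in> F_space r"
proof (rule ex_ex1I)
  show "\<exists>\<gamma>odd. Abs_fps (\<lambda>n. if even n then \<gamma>even (n div 2) else \<gamma>odd (n div 2)) \<in> F_space r"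
    using odd_completion_in_F_space[of \<gamma>even r]
    by (intro exI[of _ "\<lambda>k. odd_completion \<gamma>even r (2 * k + 1)"])
       (simp add: interleave_odd_completion)
next
  fix \<gamma>odd \<gamma>odd' :: "nat \<Rightarrow> 'a"
  assume "Abs_fps (\<lambda>n. if even n then \<gamma>even (n div 2) else \<gamma>odd (n div 2)) \<in> F_space r"
    and "Abs_fps (\<lambda>n. if even n then \<gamma>even (n div 2) else \<gamma>odd' (n div 2)) \<in> F_space r"
  then have eq: "Abs_fps (\<lambda>n. if even n then \<gamma>even (n div 2) else \<gamma>odd (n div 2))
           = Abs_fps (\<lambda>n. if even n then \<gamma>even (n div 2) else \<gamma>odd' (n div 2))"
    by (rule F_space_eqI) simp
  show "\<gamma>odd = \<gamma>odd'"
  proof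
    fix k
    show "\<gamma>odd k = \<gamma>odd' k"
      using arg_cong[OF eq, of "\<lambda>\<phi>. \<phi> $ (2 * k + 1)"] by simp
  qed
qed

end
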